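(* For every $N$ there is $t>1$ with the following property. Let $\theta\in\Theta_N$ and consider the renormalization triangulation associated with any sector renormalization of $\mathbb{L}_\theta$. Then any two sectors (triangles) of this triangulation have comparable angles at $0$: the ratio of their angles lies in $[1/t,t]$.
   Context: For $\theta\in\mathbb{R}/\mathbb{Z}$ let $\mathbb{L}_\theta:\overline{\mathbb{D}}\to\overline{\mathbb{D}}$, $z\mapsto e^{2\pi i\theta}z$. $\Theta_N$ is the set of $\theta$ such that $\theta=[0;a_1,a_2,\dots]$ with all $|a_i|\le N$, or $\theta=1-[0;a_1,a_2,\dots]$ with all $|a_i|\le N$. A sector renormalization of $\mathbb{L}_\theta$ consists of a closed sector $\mathbb{X}=\mathbb{X}_-\cup\mathbb{X}_+\subset\overline{\mathbb{D}}$ with vertex $0$, split into two closed subsectors with common boundary ray through $1$ (one of them may degenerate to a ray, not both), and iterates $\mathbb{L}_\theta^{\mathbf a}|_{\mathbb{X}_-}$, $\mathbb{L}_\theta^{\mathbf b}|_{\mathbb{X}_+}$ realizing the first return of points of $\mathbb{X}_-\cup\mathbb{X}_+$ to $\mathbb{X}$; the gluing map $z\mapsto z^{1/\omega}$ ($\omega$ the angle of $\mathbb{X}$) projects this pair to a new rotation. The associated renormalization triangulation of $\overline{\mathbb{D}}$ is the collection of sectors $\mathbb{L}_\theta^{i}(\mathbb{X}_-)$, $0\le i\le\mathbf a-1$, and $\mathbb{L}_\theta^{i}(\mathbb{X}_+)$, $0\le i\le\mathbf b-1$. *)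

theory Defs
  imports "HOL-Analysis.Analysis"
begin

text \<open>Finite continued fraction [0; a_k, a_(k+1), ..., a_(k+n-1)].\<close>
fun cf_aux :: "(nat \<Rightarrow> nat) \<Rightarrow> nat \<Rightarrow> nat \<Rightarrow> real" where
  "cf_aux a k 0 = 0"
| "cf_aux a k (Suc n) = 1 / (real (a k) + cf_aux a (Suc k) n)"

definition cf_conv :: "(nat \<Rightarrow> nat) \<Rightarrow> nat \<Rightarrow> real" where
  "cf_conv a n = cf_aux a 1 n"

text \<open>Theta_N, angles taken modulo 1 (theta real, read in R/Z).\<close>
definition Theta :: "nat \<Rightarrow> real set" where
  "Theta N = {\<theta>. \<exists>(a :: nat \<Rightarrow> nat) x.
      (\<forall>i\<ge>1. 1 \<le> a i \<and> a i \<le> N) \<and> cf_conv a \<longlonglongrightarrow> x \<and>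
      (\<theta> - x \<in> \<int> \<or> \<theta> - (1 - x) \<in> \<int>)}"

definition rot :: "real \<Rightarrow> complex \<Rightarrow> complex" where
  "rot \<theta> z = cis (2 * pi * \<theta>) * z"

text \<open>Closed sector of the closed unit disk with vertex 0, spanning the arguments
  2 pi phi for phi in [s, s + w] (so its angle at 0 is 2 pi w).\<close>
definition sector :: "real \<Rightarrow> real \<Rightarrow> complex set" where
  "sector s w = {complex_of_real r * cis (2 * pi * \<phi>) | r \<phi>.
      0 \<le> r \<and> r \<le> 1 \<and> s \<le> \<phi> \<and> \<phi> \<le> s + w}"

definition sector_angle :: "complex set \<Rightarrow> real" where
  "sector_angle S = (THE \<omega>. \<exists>s w. 0 \<le> w \<and> w \<le> 1 \<and> S = sector s w \<and> \<omega> = 2 * pi * w)"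

text \<open>Sector renormalization of L_theta: X = Xm \<union> Xp, Xm and Xp closed subsectors
  sharing the ray through 1, at most one degenerate, X a proper sector; the iterates
  L^a on Xm and L^b on Xp realise the first return to X (for points of the interiors
  of the pieces).\<close>
definition sector_renorm :: "real \<Rightarrow> complex set \<Rightarrow> complex set \<Rightarrow> nat \<Rightarrow> nat \<Rightarrow> bool" where
  "sector_renorm \<theta> Xm Xp a b \<longleftrightarrow>
    (\<exists>\<alpha> \<beta>. 0 \<le> \<alpha> \<and> 0 \<le> \<beta> \<and> 0 < \<alpha> + \<beta> \<and> \<alpha> + \<beta> < 1 \<and>
       Xm = sector (- \<alpha>) \<alpha> \<and> Xp = sector 0 \<beta>) \<and>
    1 \<le> a \<and> 1 \<le> b \<and>
    (\<forall>z \<in> interior Xm. (rot \<theta> ^^ a) z \<in> Xm \<union> Xp \<and>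
        (\<forall>k. 0 < k \<and> k < a \<longrightarrow> (rot \<theta> ^^ k) z \<notin> Xm \<union> Xp)) \<and>
    (\<forall>z \<in> interior Xp. (rot \<theta> ^^ b) z \<in> Xm \<union> Xp \<and>
        (\<forall>k. 0 < k \<and> k < b \<longrightarrow> (rot \<theta> ^^ k) z \<notin> Xm \<union> Xp))"

definition renorm_triangulation :: "real \<Rightarrow> complex set \<Rightarrow> complex set \<Rightarrow> nat \<Rightarrow> nat \<Rightarrow> complex set set" where
  "renorm_triangulation \<theta> Xm Xp a b =
     {(rot \<theta> ^^ i) ` Xm | i. i < a} \<union> {(rot \<theta> ^^ i) ` Xp | i. i < b}"

end

theory Submission
  imports Defs
begin

text \<open>
  Write the two pieces as \<open>sector (- \<alpha>) \<alpha>\<close> and \<open>sector 0 \<beta>\<close>, with return times a and b.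
  Since no point of the first piece returns before time a, no multiple k\<theta> with 0 < k < a lies
  within \<alpha> of an integer, whereas a\<theta> lies within \<beta> of one, because the piece lands inside
  the union. Dirichlet's theorem turns the first fact into \<alpha> \<le> 2/a; and \<theta> \<in> \<Theta>_N is
  badly approximable, \<open>\<bar>a\<theta> - p\<bar> \<ge> c/a\<close> with c = 1/(N+2)^2, so \<alpha> \<le> (2/c) \<beta>.
  Symmetrically \<beta> \<le> (2/c) \<alpha>, and every triangle is a rotated copy of one of the pieces.
\<close>

section \<open>Bad approximability of \<open>\<Theta>\<^sub>N\<close>\<close>

definition bounded_cf_values :: "nat \<Rightarrow> real set" where
  "bounded_cf_values N =
     {x. \<exists>a::nat\<Rightarrow>nat. (\<forall>i\<ge>1. 1 \<le> a i \<and> a i \<le> N) \<and> cf_conv a \<longlonglongrightarrow> x}"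

lemma cf_aux_bounds:
  assumes "\<forall>i\<ge>k. 1 \<le> a i"
  shows "0 \<le> cf_aux a k n \<and> cf_aux a k n \<le> 1"
  using assms
proof (induction n arbitrary: k)
  case (Suc n)
  then have "0 \<le> cf_aux a (Suc k) n" "1 \<le> real (a k)" by auto
  then show ?case by (simp add: divide_simps)
qed simp

lemma cf_aux_shift: "cf_aux (\<lambda>i. a (Suc i)) k n = cf_aux a (Suc k) n"
  by (induction n arbitrary: k) auto

lemma cf_conv_Suc: "cf_conv a (Suc n) = 1 / (real (a 1) + cf_conv (\<lambda>i. a (Suc i)) n)"
  by (simp add: cf_conv_def cf_aux_shift numeral_2_eq_2)

lemma bounded_cf_values_ge:
  assumes "x \<in> bounded_cf_values N"
  shows "1 / (real N + 1) \<le> x"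
proof -
  obtain a where a: "\<forall>i\<ge>1. 1 \<le> a i \<and> a i \<le> N" and lim: "cf_conv a \<longlonglongrightarrow> x"
    using assms unfolding bounded_cf_values_def by auto
  have "1 / (real N + 1) \<le> cf_conv a (Suc n)" for n
  proof -
    have "0 \<le> cf_conv (\<lambda>i. a (Suc i)) n" "cf_conv (\<lambda>i. a (Suc i)) n \<le> 1"
      using cf_aux_bounds[of 1 "\<lambda>i. a (Suc i)" n] a by (auto simp: cf_conv_def)
    moreover have "1 \<le> a 1" "a 1 \<le> N" using a by auto
    ultimately show ?thesis unfolding cf_conv_Suc by (intro frac_le) auto
  qed
  then show ?thesis
    using LIMSEQ_le_const[OF LIMSEQ_Suc[OF lim]] by blast
qed

lemma bounded_cf_values_pos: "x \<in> bounded_cf_values N \<Longrightarrow> 0 < x"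
  using bounded_cf_values_ge[of x N] divide_pos_pos[of 1 "real N + 1"] by linarith

lemma bounded_cf_values_Gauss:
  assumes "x \<in> bounded_cf_values N"
  obtains a1 :: nat and x' where "1 \<le> a1" "a1 \<le> N" "x' \<in> bounded_cf_values N"
    "x * (real a1 + x') = 1"
proof -
  obtain a where a: "\<forall>i\<ge>1. 1 \<le> a i \<and> a i \<le> N" and lim: "cf_conv a \<longlonglongrightarrow> x"
    using assms unfolding bounded_cf_values_def by auto
  define a' where "a' = (\<lambda>i. a (Suc i))"
  have "0 < x" using bounded_cf_values_pos[OF assms] .
  have "cf_conv a' = (\<lambda>n. 1 / cf_conv a (Suc n) - real (a 1))"
  proof
    fix n
    have "0 \<le> cf_conv a' n"
      using cf_aux_bounds[of 1 a' n] a by (auto simp: cf_conv_def a'_def)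
    moreover have "1 \<le> a 1" using a by auto
    ultimately show "cf_conv a' n = 1 / cf_conv a (Suc n) - real (a 1)"
      unfolding cf_conv_Suc a'_def by simp
  qed
  moreover have "(\<lambda>n. 1 / cf_conv a (Suc n) - real (a 1)) \<longlonglongrightarrow> 1 / x - real (a 1)"
    using \<open>0 < x\<close> by (intro tendsto_intros LIMSEQ_Suc[OF lim]) auto
  ultimately have "cf_conv a' \<longlonglongrightarrow> 1 / x - real (a 1)" by simp
  then have "1 / x - real (a 1) \<in> bounded_cf_values N"
    unfolding bounded_cf_values_def using a by (intro CollectI exI[of _ a']) (auto simp: a'_def)
  moreover have "1 \<le> a 1" "a 1 \<le> N" using a by auto
  ultimately show ?thesis
    using \<open>0 < x\<close> by (intro that[of "a 1" "1 / x - real (a 1)"]) (auto simp: field_simps)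
qed

lemma bounded_cf_values_le:
  assumes "x \<in> bounded_cf_values N"
  shows "x \<le> 1 - 1 / (real N + 2)"
proof -
  obtain a1 :: nat and x' where a1: "1 \<le> a1" and x': "x' \<in> bounded_cf_values N"
    and x: "x * (real a1 + x') = 1"
    using bounded_cf_values_Gauss[OF assms] .
  have pos: "0 < 1 / (real N + 1)" by simp
  have le: "1 + 1 / (real N + 1) \<le> real a1 + x'"
    using a1 bounded_cf_values_ge[OF x'] by linarith
  have "x = 1 / (real a1 + x')"
    using x pos le by (auto simp: eq_divide_eq)
  also have "\<dots> \<le> 1 / (1 + 1 / (real N + 1))"
    using pos le by (intro divide_left_mono mult_pos_pos) linarith+
  also have "\<dots> = 1 - 1 / (real N + 2)" by (simp add: field_simps)
  finally show ?thesis .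
qed

lemma weighted_distance_Gauss_step:
  fixes x x' a A B q p :: real
  assumes x: "x * (a + x') = 1" and AB: "A + B * x = 1" and "0 \<le> x"
  shows "\<bar>q * x - p\<bar> * (A * q + B * p) =
         \<bar>p * x' - (q - a * p)\<bar> * ((1 - A * x * x') * p + A * x * (q - a * p))"
proof -
  have "q * x - p = - x * (p * x' - (q - a * p))" using x by algebra
  moreover have "x * (A * q + B * p) = (1 - A * x * x') * p + A * x * (q - a * p)"
    using x AB by algebra
  ultimately show ?thesis using \<open>0 \<le> x\<close> by (simp add: abs_mult)
qed

lemma bounded_cf_distance_ge_base:
  fixes q p a1 :: nat
  assumes x: "x \<in> bounded_cf_values N" and a1: "1 \<le> a1" "a1 \<le> N" "real a1 * x < 1"
    and "1 \<le> q" and cases: "p = 0 \<or> q \<le> p \<or> q < a1 * p"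
  shows "1 / (real N + 2) \<le> \<bar>real q * x - real p\<bar>"
  using cases
proof (elim disjE)
  assume "p = 0"
  have "1 / (real N + 2) \<le> 1 / (real N + 1)" by (simp add: frac_le)
  also have "\<dots> \<le> x" using bounded_cf_values_ge[OF x] .
  also have "\<dots> \<le> real q * x"
    using \<open>1 \<le> q\<close> bounded_cf_values_pos[OF x] by (simp add: mult_le_cancel_right1)
  finally show ?thesis using \<open>p = 0\<close> by simp
next
  assume "q \<le> p"
  have le: "1 / (real N + 2) \<le> 1 - x" using bounded_cf_values_le[OF x] by simp
  moreover have "0 < 1 / (real N + 2)" by simp
  ultimately have "0 \<le> 1 - x" by linarith
  note le
  also have "1 - x \<le> real q * (1 - x)"
    using mult_right_mono[of 1 "real q" "1 - x"] \<open>1 \<le> q\<close> \<open>0 \<le> 1 - x\<close> by simp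
  also have "\<dots> \<le> \<bar>real q * x - real p\<bar>" using \<open>q \<le> p\<close> by (simp add: algebra_simps)
  finally show ?thesis .
next
  assume "q < a1 * p"
  have "1 \<le> real a1 * real p - real q * (real a1 * x)"
  proof -
    have "real q * (real a1 * x) \<le> real q" using a1 by (simp add: mult_left_le)
    moreover have "real q + 1 \<le> real a1 * real p"
      using \<open>q < a1 * p\<close> by (metis Suc_eq_plus1 Suc_leI of_nat_1 of_nat_add of_nat_le_iff of_nat_mult)
    ultimately show ?thesis by linarith
  qed
  then have "1 / real a1 \<le> real p - real q * x"
    using a1 by (simp add: field_simps)
  moreover have "1 / (real N + 2) \<le> 1 / real a1" using a1 by (simp add: frac_le)
  ultimately show ?thesis by linarith
qed

definition bad_approx_const :: "nat \<Rightarrow> real" where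
  "bad_approx_const N = 1 / ((real N + 2) * (real N + 2))"

lemma bad_approx_const_pos: "0 < bad_approx_const N"
  unfolding bad_approx_const_def by simp

lemma bad_approx_const_le_one: "bad_approx_const N \<le> 1"
  unfolding bad_approx_const_def using mult_mono[of 1 "real N + 2" 1 "real N + 2"] by simp

text \<open>
  The Gauss map \<open>x = 1 / (a + x')\<close> sends (q, p) to (p, q - a p) and scales \<open>\<bar>q x - p\<bar>\<close> by x.
  An induction on the plain distance would lose that factor; the weights A, B absorb it.
\<close>
lemma bounded_cf_weighted_distance_ge:
  fixes q p :: nat
  assumes "x \<in> bounded_cf_values N" "1 \<le> q" "0 \<le> A" "0 \<le> B" "B \<le> 1" "A + B * x = 1"
  shows "bad_approx_const N \<le> \<bar>real q * x - real p\<bar> * (A * real q + B * real p)"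
  using assms
proof (induction q arbitrary: x p A B rule: less_induct)
  case (less q)
  obtain a1 :: nat and x' where a1: "1 \<le> a1" "a1 \<le> N" and x': "x' \<in> bounded_cf_values N"
    and x: "x * (real a1 + x') = 1"
    using bounded_cf_values_Gauss[OF less.prems(1)] .
  have "0 < x" "0 < x'"
    using bounded_cf_values_pos less.prems(1) x' by auto
  have "x \<le> 1 - 1 / (real N + 2)" using bounded_cf_values_le[OF less.prems(1)] .
  then have "x \<le> 1" using divide_pos_pos[of 1 "real N + 2"] by linarith
  have "0 \<le> B * x" using less.prems \<open>0 < x\<close> by simp
  then have "A \<le> 1" using less.prems by linarith
  show ?case
  proof (cases "p = 0 \<or> q \<le> p \<or> q < a1 * p")
    case True
    have "0 < x * x'" using \<open>0 < x\<close> \<open>0 < x'\<close> by simp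
    then have "real a1 * x < 1" using x by (simp add: algebra_simps)
    then have "1 / (real N + 2) \<le> \<bar>real q * x - real p\<bar>"
      using bounded_cf_distance_ge_base[OF less.prems(1) a1] less.prems(2) True by blast
    moreover have "1 / (real N + 2) \<le> A * real q + B * real p"
    proof -
      have "B * x \<le> x" using less.prems \<open>0 < x\<close> by (simp add: mult_left_le_one_le)
      then have "1 / (real N + 2) \<le> A"
        using less.prems \<open>x \<le> 1 - 1 / (real N + 2)\<close> by linarith
      also have "A \<le> A * real q + B * real p"
        using less.prems by (simp add: mult_le_cancel_left1 add_increasing2)
      finally show ?thesis .
    qed
    ultimately have "1 / (real N + 2) * (1 / (real N + 2))
        \<le> \<bar>real q * x - real p\<bar> * (A * real q + B * real p)"
      by (rule mult_mono) auto
    then show ?thesis unfolding bad_approx_const_def by simp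
  next
    case False
    then have p: "1 \<le> p" "p < q" "a1 * p \<le> q" by auto
    define A' where "A' = 1 - A * x * x'"
    define B' where "B' = A * x"
    have "0 \<le> x * real a1" using \<open>0 < x\<close> by simp
    moreover have "x * real a1 + x * x' = 1" using x by (simp add: distrib_left)
    ultimately have "x * x' \<le> 1" by linarith
    then have "A * (x * x') \<le> 1"
      using mult_le_one[OF \<open>A \<le> 1\<close>] \<open>0 < x'\<close> \<open>0 < x\<close> by simp
    then have "0 \<le> A'" unfolding A'_def by (simp add: mult.assoc)
    moreover have "0 \<le> B'" "B' \<le> 1"
      using less.prems mult_le_one[OF \<open>A \<le> 1\<close> _ \<open>x \<le> 1\<close>] \<open>0 < x\<close> unfolding B'_def by auto
    moreover have "A' + B' * x' = 1" unfolding A'_def B'_def by simp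
    ultimately have "bad_approx_const N
        \<le> \<bar>real p * x' - real (q - a1 * p)\<bar> * (A' * real p + B' * real (q - a1 * p))"
      using less.IH[OF p(2) x' p(1)] by blast
    also have "\<dots> = \<bar>real q * x - real p\<bar> * (A * real q + B * real p)"
      unfolding A'_def B'_def of_nat_diff[OF p(3)] of_nat_mult
      by (rule weighted_distance_Gauss_step[symmetric])
        (use x less.prems(6) \<open>0 < x\<close> in auto)
    finally show ?thesis .
  qed
qed

lemma bounded_cf_badly_approximable:
  fixes q :: nat and p :: int
  assumes x: "x \<in> bounded_cf_values N" and "1 \<le> q"
  shows "bad_approx_const N / real q \<le> \<bar>real q * x - of_int p\<bar>"
proof (cases "p < 0")
  case True
  have "bad_approx_const N / real q \<le> 1"
    using bad_approx_const_pos[of N] bad_approx_const_le_one[of N] \<open>1 \<le> q\<close>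
    by (subst divide_le_eq_1) auto
  also have "1 \<le> real q * x - of_int p"
  proof -
    have "0 \<le> real q * x" using bounded_cf_values_pos[OF x] by simp
    moreover have "of_int p \<le> (-1 :: real)" using True by simp
    ultimately show ?thesis by linarith
  qed
  finally show ?thesis by linarith
next
  case False
  then obtain n where "p = int n" by (metis nonneg_int_cases not_less)
  have "bad_approx_const N \<le> \<bar>real q * x - real n\<bar> * (1 * real q + 0 * real n)"
    using bounded_cf_weighted_distance_ge[OF x \<open>1 \<le> q\<close>, of 1 0 n] by simp
  then show ?thesis using \<open>p = int n\<close> \<open>1 \<le> q\<close> by (simp add: divide_simps mult_ac)
qed

lemma Theta_badly_approximable:
  fixes q :: nat and p :: int
  assumes "\<theta> \<in> Theta N" "1 \<le> q"
  shows "bad_approx_const N / real q \<le> \<bar>real q * \<theta> - of_int p\<bar>"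
proof -
  obtain x where x: "x \<in> bounded_cf_values N" and "\<theta> - x \<in> \<int> \<or> \<theta> - (1 - x) \<in> \<int>"
    using assms(1) unfolding Theta_def bounded_cf_values_def by blast
  then consider (direct) m :: int where "\<theta> = of_int m + x"
    | (reflected) m :: int where "\<theta> = of_int m + (1 - x)"
    by (auto elim!: Ints_cases simp: diff_eq_eq)
  then show ?thesis
  proof cases
    case (direct m)
    have "real q * \<theta> - of_int p = real q * x - of_int (p - int q * m)"
      unfolding direct by (simp add: algebra_simps)
    then show ?thesis using bounded_cf_badly_approximable[OF x assms(2)] by (simp only:)
  next
    case (reflected m)
    have "real q * \<theta> - of_int p = - (real q * x - of_int (int q + int q * m - p))"
      unfolding reflected by (simp add: algebra_simps)
    then show ?thesis using bounded_cf_badly_approximable[OF x assms(2)] by (simp only: abs_minus_cancel)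
  qed
qed

section \<open>Rotations of sectors\<close>

lemma rot_iterate: "(rot \<theta> ^^ k) z = cis (2 * pi * (real k * \<theta>)) * z"
proof (induction k)
  case (Suc k)
  have "cis (2 * pi * \<theta>) * cis (2 * pi * (real k * \<theta>)) = cis (2 * pi * (real (Suc k) * \<theta>))"
    by (simp add: cis_mult algebra_simps)
  then show ?case using Suc by (simp add: rot_def mult.assoc[symmetric])
qed simp

lemma rot_iterate_polar:
  "(rot \<theta> ^^ k) (complex_of_real \<rho> * cis (2 * pi * \<phi>)) =
     complex_of_real \<rho> * cis (2 * pi * (\<phi> + real k * \<theta>))"
proof -
  have "cis (2 * pi * (real k * \<theta>)) * cis (2 * pi * \<phi>) = cis (2 * pi * (\<phi> + real k * \<theta>))"
    by (simp add: cis_mult algebra_simps)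
  then show ?thesis by (simp add: rot_iterate mult.left_commute)
qed

lemma rot_iterate_image_sector: "(rot \<theta> ^^ k) ` sector s w = sector (s + real k * \<theta>) w"
proof
  show "(rot \<theta> ^^ k) ` sector s w \<subseteq> sector (s + real k * \<theta>) w"
    unfolding sector_def by (force simp: rot_iterate_polar)
  show "sector (s + real k * \<theta>) w \<subseteq> (rot \<theta> ^^ k) ` sector s w"
  proof
    fix z assume "z \<in> sector (s + real k * \<theta>) w"
    then obtain r \<phi> where z: "z = complex_of_real r * cis (2 * pi * \<phi>)" "0 \<le> r" "r \<le> 1"
      "s + real k * \<theta> \<le> \<phi>" "\<phi> \<le> s + real k * \<theta> + w"
      unfolding sector_def by blast
    then have "z = (rot \<theta> ^^ k) (complex_of_real r * cis (2 * pi * (\<phi> - real k * \<theta>)))"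
      by (simp add: rot_iterate_polar)
    moreover have "complex_of_real r * cis (2 * pi * (\<phi> - real k * \<theta>)) \<in> sector s w"
      unfolding sector_def using z by force
    ultimately show "z \<in> (rot \<theta> ^^ k) ` sector s w" by blast
  qed
qed

lemma cis_2pi_eq_iff: "cis (2 * pi * a) = cis (2 * pi * b) \<longleftrightarrow> (\<exists>n::int. a = b + of_int n)"
proof -
  have "cis (2 * pi * a) = cis (2 * pi * b) \<longleftrightarrow>
      sin (2 * pi * a) = sin (2 * pi * b) \<and> cos (2 * pi * a) = cos (2 * pi * b)"
    by (auto simp: complex_eq_iff)
  also have "\<dots> \<longleftrightarrow> (\<exists>n::int. 2 * pi * a = 2 * pi * b + 2 * pi * of_int n)"
    by (rule sin_cos_eq_iff)
  also have "\<dots> \<longleftrightarrow> (\<exists>n::int. a = b + of_int n)"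
    by (simp add: distrib_left[symmetric])
  finally show ?thesis .
qed

lemma polar_mem_sector_iff:
  assumes "0 < \<rho>"
  shows "complex_of_real \<rho> * cis (2 * pi * \<psi>) \<in> sector s w \<longleftrightarrow>
         \<rho> \<le> 1 \<and> (\<exists>k::int. s \<le> \<psi> + k \<and> \<psi> + k \<le> s + w)"
proof
  assume "complex_of_real \<rho> * cis (2 * pi * \<psi>) \<in> sector s w"
  then obtain r \<phi> where e: "complex_of_real \<rho> * cis (2 * pi * \<psi>) = complex_of_real r * cis (2 * pi * \<phi>)"
    and r: "0 \<le> r" "r \<le> 1" "s \<le> \<phi>" "\<phi> \<le> s + w"
    unfolding sector_def by blast
  have "r = \<rho>" using arg_cong[OF e, of norm] assms r by (simp add: norm_mult)
  then have "cis (2 * pi * \<psi>) = cis (2 * pi * \<phi>)" using e assms by simp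
  then obtain n :: int where "\<psi> = \<phi> + of_int n" by (auto simp: cis_2pi_eq_iff)
  then show "\<rho> \<le> 1 \<and> (\<exists>k::int. s \<le> \<psi> + k \<and> \<psi> + k \<le> s + w)"
    using r \<open>r = \<rho>\<close> by (intro conjI exI[of _ "- n"]) auto
next
  assume "\<rho> \<le> 1 \<and> (\<exists>k::int. s \<le> \<psi> + k \<and> \<psi> + k \<le> s + w)"
  then obtain k :: int where k: "\<rho> \<le> 1" "s \<le> \<psi> + k" "\<psi> + k \<le> s + w" by blast
  have "cis (2 * pi * \<psi>) = cis (2 * pi * (\<psi> + of_int k))"
    unfolding cis_2pi_eq_iff by (rule exI[of _ "- k"]) simp
  then show "complex_of_real \<rho> * cis (2 * pi * \<psi>) \<in> sector s w"
    unfolding sector_def using k assms by force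
qed

lemma sector_width_le:
  assumes "sector s w = sector s' w'" "0 \<le> w" "w \<le> 1"
  shows "w \<le> w'"
proof (rule ccontr)
  assume "\<not> w \<le> w'"
  have mem: "(\<exists>k::int. s \<le> \<psi> + k \<and> \<psi> + k \<le> s + w) \<longleftrightarrow> (\<exists>k::int. s' \<le> \<psi> + k \<and> \<psi> + k \<le> s' + w')"
    for \<psi>
    using polar_mem_sector_iff[of 1 \<psi> s w] polar_mem_sector_iff[of 1 \<psi> s' w'] assms(1) by simp
  have "\<exists>k::int. s \<le> s + k \<and> s + k \<le> s + w" using assms by (intro exI[of _ 0]) simp
  then obtain k :: int where k: "s' \<le> s + k" "s + k \<le> s' + w'" using mem by blast
  define \<delta> where "\<delta> = (w - w') / 2"
  have \<delta>: "0 < \<delta>" "w' + \<delta> < 1" "w' + \<delta> \<le> w"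
    using \<open>\<not> w \<le> w'\<close> \<open>w \<le> 1\<close> unfolding \<delta>_def by (simp_all add: field_simps)
  \<comment> \<open>just beyond the far edge of the second sector, yet still inside the first one\<close>
  define \<psi> where "\<psi> = s' + w' + \<delta> - k"
  have "\<exists>k::int. s \<le> \<psi> + k \<and> \<psi> + k \<le> s + w"
    using k \<delta> unfolding \<psi>_def by (intro exI[of _ 0]) simp
  then obtain m :: int where m: "s' \<le> \<psi> + m" "\<psi> + m \<le> s' + w'" using mem by blast
  have "real_of_int (m - k) \<le> - \<delta>" using m(2) unfolding \<psi>_def by simp
  then have "m - k < 0" using \<delta> by linarith
  then have "real_of_int (m - k) \<le> -1" by linarith
  moreover have "- w' - \<delta> \<le> real_of_int (m - k)" using m(1) unfolding \<psi>_def by simp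
  ultimately show False using \<delta> by linarith
qed

lemma sector_angle_sector:
  assumes "0 \<le> w" "w \<le> 1"
  shows "sector_angle (sector s w) = 2 * pi * w"
  unfolding sector_angle_def
proof (rule the_equality)
  fix \<omega> assume "\<exists>s' w'. 0 \<le> w' \<and> w' \<le> 1 \<and> sector s w = sector s' w' \<and> \<omega> = 2 * pi * w'"
  then obtain s' w' where "0 \<le> w'" "w' \<le> 1" "sector s w = sector s' w'" "\<omega> = 2 * pi * w'"
    by blast
  then show "\<omega> = 2 * pi * w"
    using sector_width_le[of s w s' w'] sector_width_le[of s' w' s w] assms by force
qed (use assms in blast)

lemma polar_in_interior_sector:
  assumes "0 < \<rho>" "\<rho> < 1" "s < \<psi>" "\<psi> < s + w"
  shows "complex_of_real \<rho> * cis (2 * pi * \<psi>) \<in> interior (sector s w)"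
proof -
  define c where "c = cis (2 * pi * \<psi>)"
  have "c \<noteq> 0" "norm c = 1" unfolding c_def by auto
  define \<delta> where "\<delta> = min (\<psi> - s) (s + w - \<psi>)"
  have "0 < \<delta>" unfolding \<delta>_def using assms by simp
  define f where "f = (\<lambda>z::complex. z / c)"
  have f_cont: "continuous_on A f" for A
    unfolding f_def using \<open>c \<noteq> 0\<close> by (intro continuous_intros) auto
  define V where "V = ball 0 1 \<inter> f -` (- \<real>\<^sub>\<le>\<^sub>0)"
  have "open V" unfolding V_def
    by (rule continuous_open_preimage[OF f_cont]) (auto simp: open_Compl)
  \<comment> \<open>the points of the open unit disc whose argument differs from that of c by less than 2 pi \<delta>\<close>
  define U where "U = V \<inter> (\<lambda>z. Arg (f z)) -` {-2 * pi * \<delta><..<2 * pi * \<delta>}"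
  have "open U" unfolding U_def
  proof (rule continuous_open_preimage)
    show "continuous_on V (\<lambda>z. Arg (f z))"
      by (rule continuous_on_Arg'[OF f_cont]) (auto simp: V_def)
  qed (use \<open>open V\<close> in auto)
  moreover have "complex_of_real \<rho> * c \<in> U"
  proof -
    have "f (complex_of_real \<rho> * c) = complex_of_real \<rho>" unfolding f_def using \<open>c \<noteq> 0\<close> by simp
    moreover have "norm (complex_of_real \<rho> * c) < 1" using \<open>norm c = 1\<close> assms by (simp add: norm_mult)
    ultimately show ?thesis unfolding U_def V_def using assms \<open>0 < \<delta>\<close> by simp
  qed
  moreover have "U \<subseteq> sector s w"
  proof
    fix z assume z: "z \<in> U"
    define u where "u = f z"
    have "u \<noteq> 0" "norm z < 1" "\<bar>Arg u\<bar> < 2 * pi * \<delta>" using z unfolding U_def V_def u_def by auto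
    have "z = u * c" unfolding u_def f_def using \<open>c \<noteq> 0\<close> by simp
    then have "norm u = norm z" using \<open>norm c = 1\<close> by (simp add: norm_mult)
    have "z = complex_of_real (norm z) * (cis (Arg u) * c)"
      using Arg_eq[OF \<open>u \<noteq> 0\<close>] \<open>z = u * c\<close> \<open>norm u = norm z\<close> by (simp add: cis_conv_exp mult.assoc)
    also have "cis (Arg u) * c = cis (2 * pi * (\<psi> + Arg u / (2 * pi)))"
      unfolding c_def by (simp add: cis_mult algebra_simps)
    finally have "z = complex_of_real (norm z) * cis (2 * pi * (\<psi> + Arg u / (2 * pi)))" .
    moreover have "- \<delta> < Arg u / (2 * pi)" "Arg u / (2 * pi) < \<delta>"
      using \<open>\<bar>Arg u\<bar> < 2 * pi * \<delta>\<close> by (simp_all add: field_simps abs_less_iff)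
    ultimately show "z \<in> sector s w"
      unfolding sector_def \<delta>_def using \<open>norm z < 1\<close>
      by (intro CollectI exI[of _ "norm z"] exI[of _ "\<psi> + Arg u / (2 * pi)"]) auto
  qed
  ultimately show ?thesis unfolding c_def[symmetric] by (rule interiorI)
qed

lemma polar_notin_sector_union:
  assumes "\<beta> < m" "m < 1 - \<alpha>" "0 \<le> \<alpha>" "0 \<le> \<beta>" "0 < \<rho>"
  shows "complex_of_real \<rho> * cis (2 * pi * m) \<notin> sector (- \<alpha>) \<alpha> \<union> sector 0 \<beta>"
proof
  assume "complex_of_real \<rho> * cis (2 * pi * m) \<in> sector (- \<alpha>) \<alpha> \<union> sector 0 \<beta>"
  then obtain j :: int where j: "- \<alpha> \<le> m + j \<and> m + j \<le> 0 \<or> 0 \<le> m + j \<and> m + j \<le> \<beta>"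
    unfolding Un_iff polar_mem_sector_iff[OF \<open>0 < \<rho>\<close>] by auto
  consider "j \<ge> 1" | "j = 0" | "j \<le> -1" by linarith
  then show False
  proof cases
    case 1
    then have "real_of_int j \<ge> 1" by simp
    then show False using j assms by linarith
  next
    case 2
    then show False using j assms by simp
  next
    case 3
    then have "real_of_int j \<le> -1" by simp
    then show False using j assms by linarith
  qed
qed

section \<open>First returns and the angles of the triangulation\<close>

lemma dist_ge_if_no_return:
  fixes p :: int
  assumes no_return: "\<forall>z \<in> interior (sector l L). (rot \<theta> ^^ k) z \<notin> X"
    and "sector l L \<subseteq> X"
  shows "L \<le> \<bar>real k * \<theta> - of_int p\<bar>"
proof (rule ccontr)
  define d where "d = real k * \<theta> - of_int p"
  assume "\<not> L \<le> \<bar>real k * \<theta> - of_int p\<bar>"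
  then have d: "- L < d" "d < L" unfolding d_def by auto
  \<comment> \<open>a point placed so that k steps move it to the middle of the arc between l + d and l + L\<close>
  define \<phi> where "\<phi> = l + L / 2 - d / 2"
  define z where "z = complex_of_real (1 / 2) * cis (2 * pi * \<phi>)"
  have "z \<in> interior (sector l L)"
    unfolding z_def using d by (intro polar_in_interior_sector) (auto simp: \<phi>_def)
  moreover have "(rot \<theta> ^^ k) z \<in> sector l L"
  proof -
    have "\<phi> + real k * \<theta> + of_int (- p) = l + L / 2 + d / 2"
      unfolding \<phi>_def d_def by (simp add: field_simps)
    then have "l \<le> \<phi> + real k * \<theta> + of_int (- p)" "\<phi> + real k * \<theta> + of_int (- p) \<le> l + L"
      using d by linarith+
    then show ?thesis
      unfolding z_def rot_iterate_polar polar_mem_sector_iff[OF half_gt_zero[OF zero_less_one]]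
      by (intro conjI exI[of _ "- p"]) auto
  qed
  ultimately show False using no_return \<open>sector l L \<subseteq> X\<close> by blast
qed

lemma shift_within_if_return:
  assumes return: "\<forall>z \<in> interior (sector l L). (rot \<theta> ^^ n) z \<in> sector (- \<alpha>) \<alpha> \<union> sector 0 \<beta>"
    and "0 \<le> \<alpha>" "0 \<le> \<beta>" "\<alpha> + \<beta> < 1" "0 < L"
  shows "\<exists>j::int. - \<alpha> \<le> l + real n * \<theta> + j \<and> l + L + real n * \<theta> + j \<le> \<beta>"
proof -
  define F where "F = \<lfloor>l + real n * \<theta> + \<alpha>\<rfloor>"
  define y where "y = l + real n * \<theta> - F"
  have y: "- \<alpha> \<le> y" "y < 1 - \<alpha>"
    unfolding y_def F_def using floor_correct[of "l + real n * \<theta> + \<alpha>"] by linarith+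
  show ?thesis
  proof (cases "y + L \<le> \<beta>")
    case True
    then show ?thesis using y unfolding y_def by (intro exI[of _ "- F"]) simp
  next
    case False
    \<comment> \<open>otherwise some interior point lands in the gap between the two sectors\<close>
    define m where "m = (max y \<beta> + min (y + L) (1 - \<alpha>)) / 2"
    have m: "\<beta> < m" "m < 1 - \<alpha>" "y < m" "m < y + L"
      using False y assms unfolding m_def by auto
    define z where "z = complex_of_real (1 / 2) * cis (2 * pi * (m - y + l))"
    have "z \<in> interior (sector l L)"
      unfolding z_def using m by (intro polar_in_interior_sector) auto
    moreover have "(rot \<theta> ^^ n) z = complex_of_real (1 / 2) * cis (2 * pi * m)"
    proof -
      have "cis (2 * pi * (m - y + l + real n * \<theta>)) = cis (2 * pi * m)"
        unfolding cis_2pi_eq_iff y_def by (intro exI[of _ F]) simp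
      then show ?thesis unfolding z_def rot_iterate_polar by simp
    qed
    moreover have "complex_of_real (1 / 2) * cis (2 * pi * m) \<notin> sector (- \<alpha>) \<alpha> \<union> sector 0 \<beta>"
      using m assms by (intro polar_notin_sector_union) auto
    ultimately have False using return by metis
    then show ?thesis ..
  qed
qed

lemma le_two_div_if_dist_ge:
  assumes "1 \<le> n" "L < 1"
    and far: "\<forall>k (p::int). 0 < k \<and> k < n \<longrightarrow> L \<le> \<bar>real k * \<theta> - of_int p\<bar>"
  shows "L \<le> 2 / real n"
proof (cases "n = 1")
  case False
  then have "0 < n - 1" using \<open>1 \<le> n\<close> by simp
  then obtain p k :: int where k: "0 < k" "k \<le> int (n - 1)"
    and p: "\<bar>of_int k * \<theta> - of_int p\<bar> < 1 / real (n - 1)"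
    by (rule Dirichlet_approx)
  have "0 < nat k" "nat k < n" using k by auto
  then have "L \<le> \<bar>real (nat k) * \<theta> - of_int p\<bar>" using far by blast
  also have "\<dots> < 1 / real (n - 1)" using p k by simp
  also have "\<dots> \<le> 2 / real n"
    using \<open>0 < n - 1\<close> by (simp add: divide_simps of_nat_diff)
  finally show ?thesis by simp
qed (use \<open>L < 1\<close> in simp)

lemma Theta_first_return_bound:
  fixes p :: int
  assumes "\<theta> \<in> Theta N" "1 \<le> n" "L < 1"
    and "\<forall>k (p::int). 0 < k \<and> k < n \<longrightarrow> L \<le> \<bar>real k * \<theta> - of_int p\<bar>"
    and "\<bar>real n * \<theta> - of_int p\<bar> \<le> M"
  shows "L \<le> 2 / bad_approx_const N * M"
proof -
  have "L \<le> 2 / real n" using le_two_div_if_dist_ge assms(2-4) .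
  also have "\<dots> = 2 / bad_approx_const N * (bad_approx_const N / real n)"
    using bad_approx_const_pos[of N] by simp
  also have "\<dots> \<le> 2 / bad_approx_const N * M"
    using Theta_badly_approximable[OF assms(1,2), of p] assms(5) bad_approx_const_pos[of N]
    by (intro mult_left_mono) auto
  finally show ?thesis .
qed

lemma sector_renorm_widths_comparable:
  assumes \<theta>: "\<theta> \<in> Theta N" and renorm: "sector_renorm \<theta> (sector (- \<alpha>) \<alpha>) (sector 0 \<beta>) a b"
    and "0 < \<alpha>" "0 < \<beta>" "\<alpha> + \<beta> < 1"
  shows "\<alpha> \<le> 2 / bad_approx_const N * \<beta>"
    and "\<beta> \<le> 2 / bad_approx_const N * \<alpha>"
proof -
  let ?X = "sector (- \<alpha>) \<alpha> \<union> sector 0 \<beta>"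
  have "1 \<le> a" "1 \<le> b"
    and return_m: "\<forall>z\<in>interior (sector (- \<alpha>) \<alpha>). (rot \<theta> ^^ a) z \<in> ?X \<and>
        (\<forall>k. 0 < k \<and> k < a \<longrightarrow> (rot \<theta> ^^ k) z \<notin> ?X)"
    and return_p: "\<forall>z\<in>interior (sector 0 \<beta>). (rot \<theta> ^^ b) z \<in> ?X \<and>
        (\<forall>k. 0 < k \<and> k < b \<longrightarrow> (rot \<theta> ^^ k) z \<notin> ?X)"
    using renorm unfolding sector_renorm_def by blast+
  obtain j :: int where "- \<alpha> \<le> - \<alpha> + real a * \<theta> + j" "- \<alpha> + \<alpha> + real a * \<theta> + j \<le> \<beta>"
    using shift_within_if_return[where l="- \<alpha>" and L=\<alpha> and n=a and \<theta>=\<theta> and \<alpha>=\<alpha> and \<beta>=\<beta>] return_m assms by auto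
  then have close: "\<bar>real a * \<theta> - of_int (- j)\<bar> \<le> \<beta>" using \<open>0 < \<beta>\<close> by auto
  have far: "\<forall>k (p::int). 0 < k \<and> k < a \<longrightarrow> \<alpha> \<le> \<bar>real k * \<theta> - of_int p\<bar>"
    using dist_ge_if_no_return[where l="- \<alpha>" and L=\<alpha> and X="?X" and \<theta>=\<theta>] return_m by auto
  show "\<alpha> \<le> 2 / bad_approx_const N * \<beta>"
    using Theta_first_return_bound[OF \<theta> \<open>1 \<le> a\<close> _ far close] assms by linarith
  obtain i :: int where "- \<alpha> \<le> 0 + real b * \<theta> + i" "0 + \<beta> + real b * \<theta> + i \<le> \<beta>"
    using shift_within_if_return[where l=0 and L=\<beta> and n=b and \<theta>=\<theta> and \<alpha>=\<alpha> and \<beta>=\<beta>] return_p assms by auto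
  then have close': "\<bar>real b * \<theta> - of_int (- i)\<bar> \<le> \<alpha>" using \<open>0 < \<alpha>\<close> by auto
  have far': "\<forall>k (p::int). 0 < k \<and> k < b \<longrightarrow> \<beta> \<le> \<bar>real k * \<theta> - of_int p\<bar>"
    using dist_ge_if_no_return[where l=0 and L=\<beta> and X="?X" and \<theta>=\<theta>] return_p by auto
  show "\<beta> \<le> 2 / bad_approx_const N * \<alpha>"
    using Theta_first_return_bound[OF \<theta> \<open>1 \<le> b\<close> _ far' close'] assms by linarith
qed

lemma renorm_triangulation_sector_angle:
  assumes "S \<in> renorm_triangulation \<theta> (sector (- \<alpha>) \<alpha>) (sector 0 \<beta>) a b"
    and "0 \<le> \<alpha>" "\<alpha> \<le> 1" "0 \<le> \<beta>" "\<beta> \<le> 1"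
  shows "sector_angle S \<in> {2 * pi * \<alpha>, 2 * pi * \<beta>}"
  using assms unfolding renorm_triangulation_def
  by (auto simp: rot_iterate_image_sector sector_angle_sector)

lemma renorm_triangulation_angle_le:
  assumes "\<theta> \<in> Theta N" "sector_renorm \<theta> Xm Xp a b"
    and "S \<in> renorm_triangulation \<theta> Xm Xp a b" "T \<in> renorm_triangulation \<theta> Xm Xp a b"
    and "0 < sector_angle S" "0 < sector_angle T"
  shows "sector_angle S \<le> 2 / bad_approx_const N * sector_angle T"
proof -
  define t where "t = 2 / bad_approx_const N"
  have "1 \<le> t"
    unfolding t_def using bad_approx_const_pos[of N] bad_approx_const_le_one[of N]
    by (simp add: le_divide_eq)
  obtain \<alpha> \<beta> where "0 \<le> \<alpha>" "0 \<le> \<beta>" "\<alpha> + \<beta> < 1"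
    and X: "Xm = sector (- \<alpha>) \<alpha>" "Xp = sector 0 \<beta>"
    using assms(2) unfolding sector_renorm_def by blast
  then have angles: "sector_angle S \<in> {2 * pi * \<alpha>, 2 * pi * \<beta>}" "sector_angle T \<in> {2 * pi * \<alpha>, 2 * pi * \<beta>}"
    using renorm_triangulation_sector_angle assms(3,4) by auto
  show ?thesis
  proof (cases "sector_angle S = sector_angle T")
    case True
    then show ?thesis using \<open>1 \<le> t\<close> assms(6) unfolding t_def[symmetric] by simp
  next
    case False
    with angles assms(5,6) have "0 < \<alpha>" "0 < \<beta>" by (auto simp: zero_less_mult_iff)
    then have "\<alpha> \<le> t * \<beta>" "\<beta> \<le> t * \<alpha>"
      using sector_renorm_widths_comparable assms(1,2) \<open>\<alpha> + \<beta> < 1\<close> unfolding X t_def by auto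
    then show ?thesis using False angles unfolding t_def[symmetric] by auto
  qed
qed

lemma divide_mem_interval_if_comparable:
  fixes u v t :: real
  assumes "0 < u" "0 < v" "u \<le> t * v" "v \<le> t * u"
  shows "u / v \<in> {1 / t..t}"
proof -
  have "0 < t"
  proof (rule ccontr)
    assume "\<not> 0 < t"
    then have "t * v \<le> 0" using \<open>0 < v\<close> by (simp add: mult_nonpos_nonneg)
    then show False using assms by linarith
  qed
  then show ?thesis using assms by (auto simp: field_simps)
qed

theorem lemmaA3:
  fixes N :: nat
  shows "\<exists>t>1. \<forall>\<theta> Xm Xp a b.
    \<theta> \<in> Theta N \<and> sector_renorm \<theta> Xm Xp a b \<longrightarrow>
    (\<forall>S \<in> renorm_triangulation \<theta> Xm Xp a b. \<forall>T \<in> renorm_triangulation \<theta> Xm Xp a b.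
       0 < sector_angle S \<and> 0 < sector_angle T \<longrightarrow>
       sector_angle S / sector_angle T \<in> {1/t..t})"
proof (intro exI conjI allI impI ballI)
  show "1 < 2 / bad_approx_const N"
    using bad_approx_const_pos[of N] bad_approx_const_le_one[of N] by (simp add: less_divide_eq)
next
  fix \<theta> Xm Xp a b S T
  assume "\<theta> \<in> Theta N \<and> sector_renorm \<theta> Xm Xp a b"
    and "S \<in> renorm_triangulation \<theta> Xm Xp a b" "T \<in> renorm_triangulation \<theta> Xm Xp a b"
    and "0 < sector_angle S \<and> 0 < sector_angle T"
  then show "sector_angle S / sector_angle T \<in> {1 / (2 / bad_approx_const N)..2 / bad_approx_const N}"
    by (intro divide_mem_interval_if_comparable renorm_triangulation_angle_le) auto
qed

end
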